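(* Let $a\in\mathbb{C}$ and $\varphi(z)=az^2+(1-2a)z+a$, so that $\varphi(1)=1$ and $\varphi'(1)=1$. Then $\varphi$ maps the open unit disk $\mathbb{D}$ into $\mathbb{D}$ if and only if $|a-\tfrac14|\le \tfrac14$. Moreover, if $|a-\tfrac14|\le\tfrac14$ and $a\neq 0$, then the only points $\zeta\in\partial\mathbb{D}$ with $|\varphi(\zeta)|=1$ are $\zeta=1$ (with $\varphi(1)=1$) and, only in the case $|a-\tfrac14|=\tfrac14$, the point $\zeta=-1$ (with $\varphi(-1)=4a-1$); every other point of $\partial\mathbb{D}$ is mapped into $\mathbb{D}$.
   Context: $\mathbb{D}=\{z\in\mathbb{C}:|z|<1\}$ is the open unit disk and $\partial\mathbb{D}$ the unit circle. $\varphi$ is a polynomial, hence analytic on a neighborhood of $\overline{\mathbb{D}}$. *)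

theory Defs
  imports "HOL-Analysis.Analysis"
begin

definition phi :: "complex \<Rightarrow> complex \<Rightarrow> complex" where
  "phi a z = a * z^2 + (1 - 2*a) * z + a"

end

theory Submission
  imports Defs "HOL-Complex_Analysis.Complex_Analysis"
begin

text \<open>
  On the unit circle \<open>\<phi>(z) = z (1 - a s)\<close> with \<open>s = |z - 1|\<^sup>2 \<in> [0, 4]\<close>, and
  \<open>|1 - a s|\<^sup>2 = 1 - s (2 Re a - s |a|\<^sup>2)\<close>. So \<open>|\<phi>| \<le> 1\<close> on the circle as soon as
  \<open>4 |a|\<^sup>2 \<le> 2 Re a\<close>, which is \<open>|a - 1/4| \<le> 1/4\<close>; for \<open>a \<noteq> 0\<close> equality forces
  \<open>s = 0\<close> (\<open>z = 1\<close>) or \<open>s = 4\<close> (\<open>z = -1\<close>, possible only when \<open>|a - 1/4| = 1/4\<close>).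
  Necessity of the disk condition comes from \<open>\<phi>(-1) = 4a - 1\<close> by continuity;
  sufficiency from the maximum modulus principle and the open mapping theorem.
\<close>

lemma norm_minus_one_sq_plus_norm_plus_one_sq:
  "(cmod (z - 1))\<^sup>2 + (cmod (z + 1))\<^sup>2 = 2 * (cmod z)\<^sup>2 + 2"
  by (simp only: cmod_power2) (simp add: power2_eq_square algebra_simps)

lemma norm_minus_one_sq_on_circle:
  assumes "cmod z = 1"
  shows "(cmod (z - 1))\<^sup>2 \<le> 4" and "(cmod (z - 1))\<^sup>2 = 4 \<longleftrightarrow> z = -1"
proof -
  have "(cmod (z - 1))\<^sup>2 + (cmod (z + 1))\<^sup>2 = 4"
    using norm_minus_one_sq_plus_norm_plus_one_sq [of z] assms by simp
  then show "(cmod (z - 1))\<^sup>2 \<le> 4" and "(cmod (z - 1))\<^sup>2 = 4 \<longleftrightarrow> z = -1"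
    using zero_le_power2 [of "cmod (z + 1)"] by (linarith, auto simp: add_eq_0_iff2)
qed

lemma phi_on_circle:
  assumes "cmod z = 1"
  shows "phi a z = z * (1 - a * of_real ((cmod (z - 1))\<^sup>2))"
proof -
  have "z * cnj z = 1"
    using assms complex_norm_square [of z] by simp
  then have "z * ((z - 1) * cnj (z - 1)) = - (z - 1)\<^sup>2"
    by (simp add: power2_eq_square algebra_simps)
  then have circle: "z * of_real ((cmod (z - 1))\<^sup>2) = - (z - 1)\<^sup>2"
    by (simp only: complex_norm_square)
  have "z * (1 - a * of_real ((cmod (z - 1))\<^sup>2)) = z - a * (z * of_real ((cmod (z - 1))\<^sup>2))"
    by (simp add: algebra_simps)
  also have "\<dots> = z + a * (z - 1)\<^sup>2"
    by (simp only: circle) simp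
  also have "\<dots> = phi a z"
    by (simp add: phi_def power2_eq_square algebra_simps)
  finally show ?thesis ..
qed

lemma norm_one_minus_real_multiple_sq:
  "(cmod (1 - a * of_real t))\<^sup>2 = 1 - t * (2 * Re a - t * (cmod a)\<^sup>2)"
  by (simp only: cmod_power2) (simp add: power2_eq_square algebra_simps)

lemma norm_phi_on_circle_sq:
  assumes "cmod z = 1"
  defines "s \<equiv> (cmod (z - 1))\<^sup>2"
  shows "(cmod (phi a z))\<^sup>2 = 1 - s * (2 * Re a - s * (cmod a)\<^sup>2)"
  using assms by (simp only: phi_on_circle norm_mult power_mult_distrib norm_one_minus_real_multiple_sq) simp

lemma norm_minus_quarter_sq:
  "(cmod (a - 1/4))\<^sup>2 = (cmod a)\<^sup>2 - Re a / 2 + (1/4)\<^sup>2"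
  by (simp only: cmod_power2) (simp add: power2_eq_square algebra_simps)

lemma norm_minus_quarter_le_iff: "cmod (a - 1/4) \<le> 1/4 \<longleftrightarrow> 4 * (cmod a)\<^sup>2 \<le> 2 * Re a"
proof -
  have "cmod (a - 1/4) \<le> 1/4 \<longleftrightarrow> (cmod (a - 1/4))\<^sup>2 \<le> (1/4)\<^sup>2"
    by (simp add: power_mono_iff)
  also have "\<dots> \<longleftrightarrow> 4 * (cmod a)\<^sup>2 \<le> 2 * Re a"
    unfolding norm_minus_quarter_sq by auto
  finally show ?thesis .
qed

lemma norm_minus_quarter_eq_iff: "cmod (a - 1/4) = 1/4 \<longleftrightarrow> 4 * (cmod a)\<^sup>2 = 2 * Re a"
proof -
  have "cmod (a - 1/4) = 1/4 \<longleftrightarrow> (cmod (a - 1/4))\<^sup>2 = (1/4)\<^sup>2"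
    by (simp add: power2_eq_iff_nonneg)
  also have "\<dots> \<longleftrightarrow> 4 * (cmod a)\<^sup>2 = 2 * Re a"
    unfolding norm_minus_quarter_sq by auto
  finally show ?thesis .
qed

lemma norm_phi_on_circle_le_1:
  assumes "cmod (a - 1/4) \<le> 1/4" and "cmod z = 1"
  shows "cmod (phi a z) \<le> 1"
proof -
  define s where "s = (cmod (z - 1))\<^sup>2"
  have "0 \<le> s" "s \<le> 4"
    using norm_minus_one_sq_on_circle (1) [OF assms(2)] by (simp_all add: s_def)
  moreover have "4 * (cmod a)\<^sup>2 \<le> 2 * Re a"
    using assms(1) norm_minus_quarter_le_iff by blast
  moreover have "s * (cmod a)\<^sup>2 \<le> 4 * (cmod a)\<^sup>2"
    using \<open>s \<le> 4\<close> by (simp add: mult_right_mono)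
  ultimately have "s * (cmod a)\<^sup>2 \<le> 2 * Re a"
    by linarith
  with \<open>0 \<le> s\<close> have "(cmod (phi a z))\<^sup>2 \<le> 1"
    by (simp add: norm_phi_on_circle_sq [OF assms(2)] s_def)
  then show ?thesis
    by (simp add: power_le_one_iff)
qed

lemma norm_phi_on_circle_eq_1_iff:
  assumes "cmod (a - 1/4) \<le> 1/4" and "a \<noteq> 0" and "cmod z = 1"
  shows "cmod (phi a z) = 1 \<longleftrightarrow> z = 1 \<or> (cmod (a - 1/4) = 1/4 \<and> z = -1)"
proof -
  define s where "s = (cmod (z - 1))\<^sup>2"
  have s_le_4: "s \<le> 4" and s_eq_4_iff: "s = 4 \<longleftrightarrow> z = -1"
    using norm_minus_one_sq_on_circle [OF assms(3)] by (simp_all add: s_def)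
  have s_eq_0_iff: "s = 0 \<longleftrightarrow> z = 1"
    by (simp add: s_def)
  have disk: "4 * (cmod a)\<^sup>2 \<le> 2 * Re a"
    using assms(1) norm_minus_quarter_le_iff by blast
  have "0 < (cmod a)\<^sup>2"
    using assms(2) by simp
  have "cmod (phi a z) = 1 \<longleftrightarrow> (cmod (phi a z))\<^sup>2 = 1"
    by (simp add: abs_square_eq_1)
  also have "\<dots> \<longleftrightarrow> s = 0 \<or> s * (cmod a)\<^sup>2 = 2 * Re a"
    unfolding norm_phi_on_circle_sq [OF assms(3)] s_def [symmetric] by auto
  \<comment> \<open>\<open>s |a|\<^sup>2 = 2 Re a \<ge> 4 |a|\<^sup>2\<close> forces \<open>s = 4\<close>, and then equality in the disk condition.\<close>
  also have "\<dots> \<longleftrightarrow> s = 0 \<or> (s = 4 \<and> 4 * (cmod a)\<^sup>2 = 2 * Re a)"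
  proof -
    have "4 \<le> s" if "s * (cmod a)\<^sup>2 = 2 * Re a"
      using disk that mult_le_cancel_right_pos [OF \<open>0 < (cmod a)\<^sup>2\<close>, of 4 s] by linarith
    with s_le_4 show ?thesis
      by auto
  qed
  finally show ?thesis
    using s_eq_0_iff s_eq_4_iff norm_minus_quarter_eq_iff [of a] by blast
qed

lemma phi_on_circle_in_unit_disk:
  assumes "cmod (a - 1/4) \<le> 1/4" and "a \<noteq> 0" and "cmod z = 1"
    and "\<not> (z = 1 \<or> (cmod (a - 1/4) = 1/4 \<and> z = -1))"
  shows "phi a z \<in> ball 0 1"
proof -
  have "cmod (phi a z) \<noteq> 1"
    using norm_phi_on_circle_eq_1_iff [OF assms(1-3)] assms(4) by blast
  with norm_phi_on_circle_le_1 [OF assms(1,3)] show ?thesis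
    by simp
qed

lemma phi_not_constant_on_unit_disk: "\<not> phi a constant_on ball 0 1"
proof
  assume "phi a constant_on ball 0 1"
  then have "phi a (1/2) = phi a 0" "phi a (-1/2) = phi a 0"
    by (auto simp: constant_on_def)
  moreover have "phi a (1/2) + phi a (-1/2) - 2 * phi a 0 = a / 2"
    and "phi a (1/2) - phi a (-1/2) = 1 - 2 * a"
    by (simp_all add: phi_def power2_eq_square field_simps)
  ultimately have "a = 0" "a = 1/2"
    by simp_all
  then show False
    by simp
qed

lemma holomorphic_on_phi: "phi a holomorphic_on S"
  unfolding phi_def by (intro holomorphic_intros)

lemma continuous_on_phi: "continuous_on S (phi a)"
  unfolding phi_def by (intro continuous_intros)

lemma phi_maps_unit_disk_iff:
  "phi a ` ball 0 1 \<subseteq> ball 0 1 \<longleftrightarrow> cmod (a - 1/4) \<le> 1/4"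
proof
  assume "phi a ` ball 0 1 \<subseteq> ball 0 1"
  then have "phi a ` closure (ball 0 1) \<subseteq> cball 0 1"
    by (intro image_closure_subset continuous_on_phi) auto
  moreover have "-1 \<in> closure (ball (0::complex) 1)"
    by simp
  ultimately have "phi a (-1) \<in> cball 0 1"
    by blast
  then have "cmod (phi a (-1)) \<le> 1"
    by simp
  moreover have "cmod (phi a (-1)) = 4 * cmod (a - 1/4)"
  proof -
    have "phi a (-1) = 4 * (a - 1/4)"
      by (simp add: phi_def algebra_simps)
    then show ?thesis
      by (simp only: norm_mult) simp
  qed
  ultimately show "cmod (a - 1/4) \<le> 1/4"
    by linarith
next
  assume disk: "cmod (a - 1/4) \<le> 1/4"
  have "phi a ` ball 0 1 \<subseteq> cball 0 1"
  proof
    fix w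
    assume "w \<in> phi a ` ball 0 1"
    then obtain z where "z \<in> ball 0 1" "w = phi a z"
      by blast
    moreover have "cmod (phi a z) \<le> 1"
      by (rule maximum_modulus_frontier [OF holomorphic_on_phi continuous_on_phi _ _ \<open>z \<in> ball 0 1\<close>])
         (use norm_phi_on_circle_le_1 [OF disk] in auto)
    ultimately show "w \<in> cball 0 1"
      by simp
  qed
  moreover have "open (phi a ` ball 0 1)"
    by (rule open_mapping_thm [OF holomorphic_on_phi _ _ _ order_refl phi_not_constant_on_unit_disk]) auto
  ultimately show "phi a ` ball 0 1 \<subseteq> ball 0 1"
    using interior_maximal [of "phi a ` ball 0 1" "cball 0 1"] by simp
qed

theorem mainTheorem1:
  fixes a :: complex
  shows "phi a 1 = 1 \<and> deriv (phi a) 1 = 1 \<and> phi a (-1) = 4*a - 1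
    \<and> ((phi a ` ball 0 1 \<subseteq> ball 0 1) \<longleftrightarrow> cmod (a - 1/4) \<le> 1/4)
    \<and> (cmod (a - 1/4) \<le> 1/4 \<and> a \<noteq> 0 \<longrightarrow>
        (\<forall>\<zeta>\<in>sphere 0 1. cmod (phi a \<zeta>) = 1 \<longleftrightarrow>
            (\<zeta> = 1 \<or> (cmod (a - 1/4) = 1/4 \<and> \<zeta> = -1)))
        \<and> (\<forall>\<zeta>\<in>sphere 0 1. \<not> (\<zeta> = 1 \<or> (cmod (a - 1/4) = 1/4 \<and> \<zeta> = -1))
              \<longrightarrow> phi a \<zeta> \<in> ball 0 1))"
proof -
  have "(phi a has_field_derivative 2 * a * 1 + (1 - 2 * a)) (at 1)"
    unfolding phi_def [abs_def] by (auto intro!: derivative_eq_intros)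
  then have "deriv (phi a) 1 = 1"
    by (simp add: DERIV_imp_deriv)
  moreover have "phi a 1 = 1" "phi a (-1) = 4 * a - 1"
    by (simp_all add: phi_def)
  moreover have "cmod (a - 1/4) \<le> 1/4 \<and> a \<noteq> 0 \<longrightarrow>
      (\<forall>\<zeta>\<in>sphere 0 1. cmod (phi a \<zeta>) = 1 \<longleftrightarrow> (\<zeta> = 1 \<or> (cmod (a - 1/4) = 1/4 \<and> \<zeta> = -1)))
      \<and> (\<forall>\<zeta>\<in>sphere 0 1. \<not> (\<zeta> = 1 \<or> (cmod (a - 1/4) = 1/4 \<and> \<zeta> = -1))
            \<longrightarrow> phi a \<zeta> \<in> ball 0 1)"
    using norm_phi_on_circle_eq_1_iff [of a] phi_on_circle_in_unit_disk [of a] by simp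
  ultimately show ?thesis
    using phi_maps_unit_disk_iff [of a] by blast
qed

end
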